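(* Let $G=(V,E)$ be a finite graph with a biclique partition $B_1=L_1\times R_1,\dots,B_m=L_m\times R_m$ of its edges, and let $\mathbb{G}=\{h_1,\dots,h_m\}\subseteq\{0,1,\star\}^V$ where $h_i(v)=0$ for $v\in L_i$, $h_i(v)=1$ for $v\in R_i$, $h_i(v)=\star$ otherwise. Let $\overline{\mathbb{G}}\subseteq\{0,1\}^V$ be any disambiguation of $\mathbb{G}$. Then the number of distinct vectors $(\bar h(v))_{\bar h\in\overline{\mathbb{G}}}$, $v\in V$, is at least $\chi(G)$; consequently, if $d$ is the VC dimension of the dual class $\overline{\mathbb{G}}^\top$ (the class of functions $\bar h\mapsto\bar h(v)$ on $\overline{\mathbb{G}}$, one for each $v\in V$), then $\chi(G)\le\sum_{i=0}^{d}\binom{|\overline{\mathbb{G}}|}{i}$.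
   Context: A disambiguation of a partial class $\mathbb{H}\subseteq\{0,1,\star\}^V$ on finite $V$ is a total class $\overline{\mathbb{H}}\subseteq\{0,1\}^V$ such that for every $h\in\mathbb{H}$ there is $\bar h\in\overline{\mathbb{H}}$ with $\bar h(v)=h(v)$ for all $v\in h^{-1}(\{0,1\})$. A biclique partition of $G$ is a family of complete bipartite subgraphs $L_i\times R_i$ (edges $\{u,v\}$, $u\in L_i$, $v\in R_i$) whose edge sets partition $E$. $\chi(G)$ is the chromatic number. The VC dimension of a total class is the largest size of a set on which all $0/1$ patterns are realized. *)

theory Defs
  imports Main "HOL-Library.FuncSet"
begin

definition simple_graph :: "'a set \<Rightarrow> 'a set set \<Rightarrow> bool" where
  "simple_graph V E \<longleftrightarrow> finite V \<and>
     (\<forall>e\<in>E. \<exists>u v. e = {u, v} \<and> u \<noteq> v \<and> u \<in> V \<and> v \<in> V)"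

definition proper_colouring :: "'a set \<Rightarrow> 'a set set \<Rightarrow> nat \<Rightarrow> ('a \<Rightarrow> nat) \<Rightarrow> bool" where
  "proper_colouring V E k f \<longleftrightarrow> f ` V \<subseteq> {..<k} \<and>
     (\<forall>u\<in>V. \<forall>v\<in>V. {u, v} \<in> E \<longrightarrow> f u \<noteq> f v)"

definition chromatic_number :: "'a set \<Rightarrow> 'a set set \<Rightarrow> nat" where
  "chromatic_number V E = (LEAST k. \<exists>f. proper_colouring V E k f)"

definition biclique_edges :: "'a set \<Rightarrow> 'a set \<Rightarrow> 'a set set" where
  "biclique_edges L R = {{u, v} | u v. u \<in> L \<and> v \<in> R}"

definition biclique_partition ::
  "'a set \<Rightarrow> 'a set set \<Rightarrow> nat \<Rightarrow> (nat \<Rightarrow> 'a set) \<Rightarrow> (nat \<Rightarrow> 'a set) \<Rightarrow> bool" where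
  "biclique_partition V E m L R \<longleftrightarrow>
     (\<forall>i<m. L i \<subseteq> V \<and> R i \<subseteq> V \<and> L i \<inter> R i = {} \<and> biclique_edges (L i) (R i) \<subseteq> E) \<and>
     (\<forall>i<m. \<forall>j<m. i \<noteq> j \<longrightarrow> biclique_edges (L i) (R i) \<inter> biclique_edges (L j) (R j) = {}) \<and>
     (\<Union>i<m. biclique_edges (L i) (R i)) = E"

text \<open>Partial functions in {0,1,*}^V: None = *, Some False = 0, Some True = 1.
  The partial concept h_i associated with the biclique L_i x R_i.\<close>
definition biclique_concept :: "'a set \<Rightarrow> 'a set \<Rightarrow> 'a \<Rightarrow> bool option" where
  "biclique_concept L R v =
     (if v \<in> L then Some False else if v \<in> R then Some True else None)"

definition disambiguation :: "'a set \<Rightarrow> ('a \<Rightarrow> bool option) set \<Rightarrow> ('a \<Rightarrow> bool) set \<Rightarrow> bool" where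
  "disambiguation V H Hb \<longleftrightarrow> Hb \<subseteq> (V \<rightarrow>\<^sub>E (UNIV :: bool set)) \<and>
     (\<forall>h\<in>H. \<exists>hb\<in>Hb. \<forall>v\<in>V. \<forall>b. h v = Some b \<longrightarrow> hb v = b)"

definition dual_class :: "'a set \<Rightarrow> ('a \<Rightarrow> bool) set \<Rightarrow> (('a \<Rightarrow> bool) \<Rightarrow> bool) set" where
  "dual_class V Hb = (\<lambda>v. \<lambda>hb\<in>Hb. hb v) ` V"

definition shatters :: "('b \<Rightarrow> bool) set \<Rightarrow> 'b set \<Rightarrow> bool" where
  "shatters C S \<longleftrightarrow> (\<forall>T\<subseteq>S. \<exists>c\<in>C. \<forall>x\<in>S. c x \<longleftrightarrow> x \<in> T)"

definition vc_dim :: "'b set \<Rightarrow> ('b \<Rightarrow> bool) set \<Rightarrow> nat" where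
  "vc_dim X C = Max {card S | S. S \<subseteq> X \<and> shatters C S}"

end

theory Submission
  imports Defs
begin

text \<open>If \<open>{u, v}\<close> is an edge, it lies in some biclique \<open>L\<^sub>i \<times> R\<^sub>i\<close>, and the
  disambiguation of \<open>h\<^sub>i\<close> takes different values at \<open>u\<close> and \<open>v\<close>. Hence the dual vector
  \<open>v \<mapsto> (h v)\<^sub>h\<close> is a proper colouring of \<open>G\<close>, whose number of colours is the size of the
  dual class. The binomial bound is the Sauer--Shelah lemma for the dual class, obtained from
  Pajor's lemma: a family of subsets of a finite set shatters at least as many sets as it has
  members.\<close>

definition shatters_sets :: "'b set set \<Rightarrow> 'b set \<Rightarrow> bool" where
  "shatters_sets F S \<longleftrightarrow> (\<forall>T\<subseteq>S. \<exists>A\<in>F. A \<inter> S = T)"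

lemma shatters_sets_traces_iff:
  assumes "S \<subseteq> X"
  shows "shatters_sets ((\<lambda>c. {x\<in>X. c x}) ` C) S \<longleftrightarrow> shatters C S"
  unfolding shatters_sets_def shatters_def
proof (intro iffI allI impI)
  fix T assume "\<forall>T\<subseteq>S. \<exists>A\<in>(\<lambda>c. {x\<in>X. c x}) ` C. A \<inter> S = T" "T \<subseteq> S"
  then obtain A where "A \<in> (\<lambda>c. {x\<in>X. c x}) ` C" "A \<inter> S = T" by meson
  then obtain c where c: "c \<in> C" "T = {x\<in>X. c x} \<inter> S" by blast
  have "\<forall>x\<in>S. c x \<longleftrightarrow> x \<in> T" unfolding c(2) using assms by auto
  then show "\<exists>c\<in>C. \<forall>x\<in>S. c x \<longleftrightarrow> x \<in> T" using c(1) by blast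
next
  fix T assume "\<forall>T\<subseteq>S. \<exists>c\<in>C. \<forall>x\<in>S. c x \<longleftrightarrow> x \<in> T" "T \<subseteq> S"
  then obtain c where c: "c \<in> C" "\<forall>x\<in>S. c x \<longleftrightarrow> x \<in> T" by blast
  have "{x\<in>X. c x} \<inter> S = T" using c(2) assms \<open>T \<subseteq> S\<close> by auto
  then show "\<exists>A\<in>(\<lambda>c. {x\<in>X. c x}) ` C. A \<inter> S = T" using c(1) by blast
qed

lemma shatters_sets_remove:
  assumes "x \<notin> S" "shatters_sets ((\<lambda>A. A - {x}) ` F) S"
  shows "shatters_sets F S"
  unfolding shatters_sets_def
proof (intro allI impI)
  fix T assume "T \<subseteq> S"
  then obtain A where "A \<in> F" "(A - {x}) \<inter> S = T"
    using assms(2) unfolding shatters_sets_def by blast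
  then show "\<exists>A\<in>F. A \<inter> S = T" using assms(1) by blast
qed

lemma shatters_sets_insert:
  assumes "x \<notin> S" "shatters_sets {A\<in>F. x \<notin> A \<and> insert x A \<in> F} S"
  shows "shatters_sets F (insert x S)"
  unfolding shatters_sets_def
proof (intro allI impI)
  fix T assume "T \<subseteq> insert x S"
  then have "T - {x} \<subseteq> S" by blast
  then obtain A where A: "A \<in> F" "x \<notin> A" "insert x A \<in> F" "A \<inter> S = T - {x}"
    using assms(2) unfolding shatters_sets_def by blast
  show "\<exists>A\<in>F. A \<inter> insert x S = T"
  proof (cases "x \<in> T")
    case True
    then have "insert x A \<inter> insert x S = T" using A(4) by auto
    then show ?thesis using A(3) by blast
  next
    case False
    then have "A \<inter> insert x S = T" using A(2,4) by auto
    then show ?thesis using A(1) by blast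
  qed
qed

text \<open>Deleting \<open>x\<close> from all members of \<open>F\<close> merges exactly the pairs \<open>A, insert x A\<close>.\<close>

lemma card_eq_card_remove_plus_card_pairs:
  assumes "finite F"
  shows "card F = card ((\<lambda>A. A - {x}) ` F) + card {A\<in>F. x \<notin> A \<and> insert x A \<in> F}"
proof -
  define Fn where "Fn = {A\<in>F. x \<notin> A}"
  define Fy where "Fy = {A\<in>F. x \<in> A}"
  have fin: "finite Fn" "finite Fy" using assms by (simp_all add: Fn_def Fy_def)
  have F: "F = Fn \<union> Fy" "Fn \<inter> Fy = {}" by (auto simp: Fn_def Fy_def)
  then have "card F = card Fn + card Fy" using fin by (simp add: card_Un_disjoint)
  moreover have "card Fy = card ((\<lambda>A. A - {x}) ` Fy)"
    by (rule card_image[symmetric]) (simp add: inj_on_def Fy_def, metis insert_Diff)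
  moreover have "card Fn + card ((\<lambda>A. A - {x}) ` Fy) =
      card (Fn \<union> (\<lambda>A. A - {x}) ` Fy) + card (Fn \<inter> (\<lambda>A. A - {x}) ` Fy)"
    using fin by (intro card_Un_Int) auto
  moreover have "Fn \<union> (\<lambda>A. A - {x}) ` Fy = (\<lambda>A. A - {x}) ` F"
  proof -
    have "(\<lambda>A. A - {x}) ` Fn = Fn" by (rule image_cong[where g = id, simplified]) (auto simp: Fn_def)
    then show ?thesis using F(1) by (metis image_Un)
  qed
  moreover have "Fn \<inter> (\<lambda>A. A - {x}) ` Fy = {A\<in>F. x \<notin> A \<and> insert x A \<in> F}"
  proof (intro equalityI subsetI)
    fix A assume "A \<in> Fn \<inter> (\<lambda>A. A - {x}) ` Fy"
    then obtain B where "A \<in> F" "x \<notin> A" "B \<in> F" "x \<in> B" "A = B - {x}"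
      by (auto simp: Fn_def Fy_def)
    then show "A \<in> {A\<in>F. x \<notin> A \<and> insert x A \<in> F}" by (simp add: insert_absorb)
  next
    fix A assume A: "A \<in> {A\<in>F. x \<notin> A \<and> insert x A \<in> F}"
    then have "insert x A \<in> Fy" "A = insert x A - {x}" by (simp_all add: Fy_def)
    then show "A \<in> Fn \<inter> (\<lambda>A. A - {x}) ` Fy" using A by (auto simp: Fn_def)
  qed
  ultimately show ?thesis by simp
qed

lemma card_le_card_shattered_sets:
  assumes "finite X" "F \<subseteq> Pow X"
  shows "card F \<le> card {S. S \<subseteq> X \<and> shatters_sets F S}"
  using assms
proof (induction X arbitrary: F rule: finite_induct)
  case empty
  then have "F = {} \<or> F = {{}}" by auto
  then show ?case
  proof
    assume "F = {{}}"
    then have "{S. S \<subseteq> {} \<and> shatters_sets F S} = {{}}" by (auto simp: shatters_sets_def)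
    then show ?thesis using \<open>F = {{}}\<close> by simp
  qed simp
next
  case (insert x X F)
  define F0 where "F0 = (\<lambda>A. A - {x}) ` F"
  define F1 where "F1 = {A\<in>F. x \<notin> A \<and> insert x A \<in> F}"
  define Sh0 where "Sh0 = {S. S \<subseteq> X \<and> shatters_sets F0 S}"
  define Sh1 where "Sh1 = {S. S \<subseteq> X \<and> shatters_sets F1 S}"
  have "finite F" using insert(1,4) by (meson finite_Pow_iff finite_insert finite_subset)
  then have "card F = card F0 + card F1"
    unfolding F0_def F1_def by (rule card_eq_card_remove_plus_card_pairs)
  also have "\<dots> \<le> card Sh0 + card Sh1"
  proof (rule add_mono)
    show "card F0 \<le> card Sh0"
      unfolding Sh0_def using insert.prems by (intro insert.IH) (auto simp: F0_def)
    show "card F1 \<le> card Sh1"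
      unfolding Sh1_def using insert.prems by (intro insert.IH) (auto simp: F1_def)
  qed
  also have "\<dots> = card (Sh0 \<union> insert x ` Sh1)"
  proof -
    have "inj_on (insert x) Sh1"
    proof (rule inj_onI)
      fix S S' assume "S \<in> Sh1" "S' \<in> Sh1" "insert x S = insert x S'"
      moreover have "x \<notin> S" "x \<notin> S'" using calculation(1,2) insert(2) by (auto simp: Sh1_def)
      ultimately show "S = S'" by (metis Diff_insert_absorb)
    qed
    moreover have "Sh0 \<inter> insert x ` Sh1 = {}" using insert(2) by (auto simp: Sh0_def)
    moreover have "finite Sh0" "finite Sh1" using insert(1) by (simp_all add: Sh0_def Sh1_def)
    ultimately show ?thesis by (simp add: card_Un_disjoint card_image)
  qed
  also have "\<dots> \<le> card {S. S \<subseteq> insert x X \<and> shatters_sets F S}"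
  proof (rule card_mono)
    show "finite {S. S \<subseteq> insert x X \<and> shatters_sets F S}" using insert(1) by simp
    have "S \<in> {S. S \<subseteq> insert x X \<and> shatters_sets F S}" if "S \<in> Sh0" for S
    proof -
      have S: "S \<subseteq> X" "shatters_sets ((\<lambda>A. A - {x}) ` F) S"
        using that by (simp_all add: Sh0_def F0_def)
      then have "x \<notin> S" using insert(2) by blast
      then have "shatters_sets F S" using S(2) by (rule shatters_sets_remove)
      with S(1) show ?thesis by blast
    qed
    moreover have "insert x S \<in> {S. S \<subseteq> insert x X \<and> shatters_sets F S}" if "S \<in> Sh1" for S
    proof -
      have S: "S \<subseteq> X" "shatters_sets {A\<in>F. x \<notin> A \<and> insert x A \<in> F} S"
        using that by (simp_all add: Sh1_def F1_def)
      then have "x \<notin> S" using insert(2) by blast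
      then have "shatters_sets F (insert x S)" using S(2) by (rule shatters_sets_insert)
      with S(1) show ?thesis by blast
    qed
    ultimately show "Sh0 \<union> insert x ` Sh1 \<subseteq> {S. S \<subseteq> insert x X \<and> shatters_sets F S}"
      by blast
  qed
  finally show ?case .
qed

lemma card_le_vc_dim:
  assumes "finite X" "S \<subseteq> X" "shatters C S"
  shows "card S \<le> vc_dim X C"
proof -
  have "{card S | S. S \<subseteq> X \<and> shatters C S} \<subseteq> card ` Pow X" by blast
  then have "finite {card S | S. S \<subseteq> X \<and> shatters C S}"
    using assms(1) by (meson finite_Pow_iff finite_imageI finite_subset)
  then show ?thesis using assms(2,3) unfolding vc_dim_def by (blast intro: Max_ge)
qed

lemma card_subsets_card_le:
  assumes "finite X"
  shows "card {S. S \<subseteq> X \<and> card S \<le> d} = (\<Sum>i\<le>d. card X choose i)"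
proof -
  have "{S. S \<subseteq> X \<and> card S \<le> d} = (\<Union>i\<le>d. {S. S \<subseteq> X \<and> card S = i})" by auto
  also have "card \<dots> = (\<Sum>i\<le>d. card {S. S \<subseteq> X \<and> card S = i})"
    using assms by (intro card_UN_disjoint) auto
  also have "\<dots> = (\<Sum>i\<le>d. card X choose i)" using n_subsets[OF assms] by simp
  finally show ?thesis .
qed

lemma card_le_sum_choose_vc_dim:
  assumes "finite X" "C \<subseteq> extensional X"
  shows "card C \<le> (\<Sum>i\<le>vc_dim X C. card X choose i)"
proof -
  define trace where "trace = (\<lambda>c. {x\<in>X. c x})"
  have "inj_on trace C"
  proof (rule inj_onI)
    fix c c' assume "c \<in> C" "c' \<in> C" "trace c = trace c'"
    then show "c = c'" using assms(2) unfolding trace_def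
      by (intro extensionalityI[of _ X]) (auto simp: set_eq_iff)
  qed
  then have "card C = card (trace ` C)" by (simp add: card_image)
  also have "\<dots> \<le> card {S. S \<subseteq> X \<and> shatters_sets (trace ` C) S}"
    using assms(1) by (rule card_le_card_shattered_sets) (auto simp: trace_def)
  also have "{S. S \<subseteq> X \<and> shatters_sets (trace ` C) S} = {S. S \<subseteq> X \<and> shatters C S}"
    unfolding trace_def using shatters_sets_traces_iff by blast
  also have "card \<dots> \<le> card {S. S \<subseteq> X \<and> card S \<le> vc_dim X C}"
    using assms(1) card_le_vc_dim by (intro card_mono) auto
  also have "\<dots> = (\<Sum>i\<le>vc_dim X C. card X choose i)"
    using assms(1) by (rule card_subsets_card_le)
  finally show ?thesis .
qed

lemma chromatic_number_le_card_image:
  assumes "finite V" "\<And>u v. u \<in> V \<Longrightarrow> v \<in> V \<Longrightarrow> {u, v} \<in> E \<Longrightarrow> f u \<noteq> f v"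
  shows "chromatic_number V E \<le> card (f ` V)"
proof -
  obtain g where g: "bij_betw g (f ` V) {0..<card (f ` V)}"
    using assms(1) ex_bij_betw_finite_nat by blast
  have "proper_colouring V E (card (f ` V)) (g \<circ> f)"
    unfolding proper_colouring_def
  proof (intro conjI ballI impI)
    show "(g \<circ> f) ` V \<subseteq> {..<card (f ` V)}" using bij_betw_imp_surj_on[OF g] by auto
    fix u v assume "u \<in> V" "v \<in> V" "{u, v} \<in> E"
    then show "(g \<circ> f) u \<noteq> (g \<circ> f) v"
      using assms(2) bij_betw_imp_inj_on[OF g] by (auto dest: inj_onD)
  qed
  then show ?thesis unfolding chromatic_number_def by (intro Least_le exI)
qed

lemma disambiguation_finite:
  assumes "disambiguation V H Hb" "finite V"
  shows "finite Hb"
proof (rule finite_subset)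
  show "Hb \<subseteq> V \<rightarrow>\<^sub>E (UNIV :: bool set)" using assms(1) by (simp add: disambiguation_def)
  show "finite (V \<rightarrow>\<^sub>E (UNIV :: bool set))" using assms(2) by (simp add: finite_PiE)
qed

lemma disambiguation_separates_biclique:
  assumes "disambiguation V H Hb" "biclique_concept L R \<in> H"
    and "L \<subseteq> V" "R \<subseteq> V" "L \<inter> R = {}" "a \<in> L" "b \<in> R"
  shows "\<exists>hb\<in>Hb. \<not> hb a \<and> hb b"
proof -
  have "\<exists>hb\<in>Hb. \<forall>v\<in>V. \<forall>c. biclique_concept L R v = Some c \<longrightarrow> hb v = c"
    using assms(1,2) unfolding disambiguation_def by meson
  then obtain hb where "hb \<in> Hb" and hb: "\<forall>v\<in>V. \<forall>c. biclique_concept L R v = Some c \<longrightarrow> hb v = c"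
    by blast
  have "biclique_concept L R a = Some False" "biclique_concept L R b = Some True"
    using assms(5-7) by (auto simp: biclique_concept_def)
  then have "\<not> hb a" "hb b" using hb assms(3,4,6,7) by auto
  with \<open>hb \<in> Hb\<close> show ?thesis by blast
qed

lemma disambiguation_separates_edge:
  assumes "biclique_partition V E m L R"
    and "disambiguation V ((\<lambda>i. biclique_concept (L i) (R i)) ` {..<m}) Hb"
    and "{u, v} \<in> E"
  shows "\<exists>hb\<in>Hb. hb u \<noteq> hb v"
proof -
  obtain i where i: "i < m" "{u, v} \<in> biclique_edges (L i) (R i)"
    using assms(1,3) unfolding biclique_partition_def by blast
  then obtain a b where ab: "{u, v} = {a, b}" "a \<in> L i" "b \<in> R i"
    unfolding biclique_edges_def by blast
  have "L i \<subseteq> V" "R i \<subseteq> V" "L i \<inter> R i = {}"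
    using assms(1) i(1) unfolding biclique_partition_def by simp_all
  then obtain hb where "hb \<in> Hb" "\<not> hb a" "hb b"
    using disambiguation_separates_biclique[OF assms(2) _ _ _ _ ab(2,3)] i(1) by blast
  moreover have "u = a \<and> v = b \<or> u = b \<and> v = a" using ab(1) by (simp add: doubleton_eq_iff)
  ultimately show ?thesis by blast
qed

lemma dual_class_subset_extensional: "dual_class V Hb \<subseteq> extensional Hb"
  by (auto simp: dual_class_def)

theorem mainTheorem8:
  fixes V :: "'a set" and E :: "'a set set" and m :: nat
    and L R :: "nat \<Rightarrow> 'a set" and Gb :: "('a \<Rightarrow> bool) set"
  assumes "simple_graph V E"
    and "biclique_partition V E m L R"
    and "disambiguation V ((\<lambda>i. biclique_concept (L i) (R i)) ` {..<m}) Gb"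
  shows "chromatic_number V E \<le> card (dual_class V Gb)
    \<and> chromatic_number V E \<le> (\<Sum>i\<le>vc_dim Gb (dual_class V Gb). card Gb choose i)"
proof -
  have "finite V" using assms(1) by (simp add: simple_graph_def)
  have dual_vectors_differ: "(\<lambda>hb\<in>Gb. hb u) \<noteq> (\<lambda>hb\<in>Gb. hb v)"
    if "u \<in> V" "v \<in> V" and edge: "{u, v} \<in> E" for u v
  proof
    assume eq: "(\<lambda>hb\<in>Gb. hb u) = (\<lambda>hb\<in>Gb. hb v)"
    obtain hb where "hb \<in> Gb" "hb u \<noteq> hb v"
      using disambiguation_separates_edge[OF assms(2,3) edge] by blast
    moreover have "(\<lambda>hb\<in>Gb. hb u) hb = (\<lambda>hb\<in>Gb. hb v) hb" by (simp only: eq)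
    ultimately show False by simp
  qed
  have chi: "chromatic_number V E \<le> card (dual_class V Gb)"
    unfolding dual_class_def
    by (rule chromatic_number_le_card_image[OF \<open>finite V\<close> dual_vectors_differ])
  have "card (dual_class V Gb) \<le> (\<Sum>i\<le>vc_dim Gb (dual_class V Gb). card Gb choose i)"
    using disambiguation_finite[OF assms(3) \<open>finite V\<close>] dual_class_subset_extensional
    by (rule card_le_sum_choose_vc_dim)
  with chi show ?thesis by linarith
qed

end
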